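(* Let $M_0<M$ be finite numbers, let $Q^0\subseteq\mathbb{R}^{m+1}$ be a rational polyhedron of height $M$ in the $(x,z)$-space ($x\in\mathbb{R}^m$, $z\in\mathbb{R}$), and let $Q_x\subseteq\mathbb{R}^m$ be a rational polytope of dimension at least one whose relative interior contains $\{x : \exists z>M_0 \text{ with } (x,z)\in Q^0\}$. Then $Q^0\subseteq R(Q_x,M,M_0)$.
   Context: For a polyhedron $H\subseteq\mathbb{R}^m\times\mathbb{R}$ and $\bar x\in\mathbb{R}^m$, the height of $\bar x$ with respect to $H$ is $\max\{\bar z:(\bar x,\bar z)\in H\}$ (it is $+\infty$ if unbounded and $-\infty$ if the set is empty); the height of $H$ is the supremum of the heights of all $\bar x\in\mathbb{R}^m$. For a rational polytope $Q_x\subseteq\mathbb{R}^m$ of dimension at least 1 and finite $M_0<M$, $R(Q_x,M,M_0)$ is the set of all $(\bar x,\bar z)\in\mathbb{R}^m\times\mathbb{R}$ with $\bar x$ in the affine hull of $Q_x$ and $\bar z\le M$ if $\bar x\in\mathrm{relint}(Q_x)$, and $\bar z\le M_0-\frac{d(\bar x,Q_x)}{\mathrm{diam}(Q_x)}(M-M_0)$ otherwise, where $d$ is Euclidean distance and $\mathrm{diam}$ the maximum distance between two points of $Q_x$. *)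

theory Defs
  imports "HOL-Analysis.Analysis"
begin

definition rational_polyhedron :: "'a::euclidean_space set \<Rightarrow> bool" where
  "rational_polyhedron S \<longleftrightarrow>
     (\<exists>F. finite F \<and> (\<forall>(a, b)\<in>F. (\<forall>i\<in>Basis. a \<bullet> i \<in> \<rat>) \<and> b \<in> \<rat>) \<and>
          S = (\<Inter>(a, b)\<in>F. {x. a \<bullet> x \<le> b}))"

definition rational_polytope :: "'a::euclidean_space set \<Rightarrow> bool" where
  "rational_polytope P \<longleftrightarrow>
     (\<exists>V. finite V \<and> (\<forall>v\<in>V. \<forall>i\<in>Basis. v \<bullet> i \<in> \<rat>) \<and> P = convex hull V)"

text \<open>Height of a point: sup (= max, since polyhedra are closed) of z with (x,z) in H;
  +infinity if unbounded, -infinity if empty.\<close>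
definition point_height :: "('a \<times> real) set \<Rightarrow> 'a \<Rightarrow> ereal" where
  "point_height H x = Sup (ereal ` {z. (x, z) \<in> H})"

definition height :: "('a \<times> real) set \<Rightarrow> ereal" where
  "height H = (SUP x. point_height H x)"

definition R_set :: "'a::euclidean_space set \<Rightarrow> real \<Rightarrow> real \<Rightarrow> ('a \<times> real) set" where
  "R_set Qx M M0 = {(x, z). x \<in> affine hull Qx \<and>
      (if x \<in> rel_interior Qx then z \<le> M
       else z \<le> M0 - infdist x Qx / diameter Qx * (M - M0))}"

end

theory Submission
  imports Defs
begin

text \<open>Let \<open>(x, z) \<in> Q\<^sup>0\<close> with \<open>x \<notin> relint Q\<^sub>x\<close>, so \<open>z \<le> M\<^sub>0\<close>, and let \<open>(y, w) \<in> Q\<^sup>0\<close> with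
  \<open>w > M\<^sub>0\<close>. By convexity, every point of the segment from \<open>(x, z)\<close> to \<open>(y, w)\<close> beyond the
  parameter \<open>s\<^sub>0 = (M\<^sub>0 - z) / (w - z)\<close> lies above level \<open>M\<^sub>0\<close>, so its \<open>x\<close>-part lies in \<open>Q\<^sub>x\<close>.
  Hence \<open>x\<close> is in the affine hull of \<open>Q\<^sub>x\<close>, and comparing the distances from \<open>x\<close> and from
  \<open>y \<in> Q\<^sub>x\<close> to the point with parameter \<open>s\<^sub>0\<close> gives
  \<open>d(x, Q\<^sub>x) (w - M\<^sub>0) \<le> (M\<^sub>0 - z) diam(Q\<^sub>x)\<close>. Letting \<open>w\<close> approach the height \<open>M\<close> yields the
  claim.\<close>

lemma le_height: "(x, z) \<in> H \<Longrightarrow> ereal z \<le> height H"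
proof -
  assume "(x, z) \<in> H"
  then have "ereal z \<le> point_height H x"
    unfolding point_height_def by (intro Sup_upper) auto
  also have "\<dots> \<le> height H"
    unfolding height_def by (intro SUP_upper) auto
  finally show ?thesis .
qed

lemma height_le: "(\<And>x z. (x, z) \<in> H \<Longrightarrow> z \<le> c) \<Longrightarrow> height H \<le> ereal c"
  unfolding height_def point_height_def by (auto intro!: SUP_least Sup_least)

lemma less_height_obtains:
  assumes "ereal w < height H"
  obtains x z where "(x, z) \<in> H" and "w < z"
proof -
  from assms obtain x where "ereal w < point_height H x"
    unfolding height_def by (auto simp: less_SUP_iff)
  then show ?thesis
    using that unfolding point_height_def by (auto simp: less_Sup_iff)
qed

lemma rational_polyhedron_imp_convex: "rational_polyhedron S \<Longrightarrow> convex S"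
  unfolding rational_polyhedron_def
  by (auto intro!: convex_INT simp: convex_halfspace_le)

lemma rational_polytope_imp_bounded: "rational_polytope P \<Longrightarrow> bounded P"
  unfolding rational_polytope_def by (auto intro: finite_imp_bounded_convex_hull)

lemma convex_segment_above_level:
  fixes Q :: "('a::real_vector \<times> real) set"
  assumes "convex Q" and "(x, z) \<in> Q" and "(y, w) \<in> Q" and "z \<le> h" and "h < w"
    and above: "\<And>u v. (u, v) \<in> Q \<Longrightarrow> h < v \<Longrightarrow> u \<in> S"
    and t: "(h - z) / (w - z) < t" "t \<le> 1"
  shows "(1 - t) *\<^sub>R x + t *\<^sub>R y \<in> S"
proof -
  have wz: "0 < w - z" using assms by simp
  then have "0 \<le> (h - z) / (w - z)" using \<open>z \<le> h\<close> by simp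
  then have "0 \<le> t" using t by linarith
  then have "(1 - t) *\<^sub>R (x, z) + t *\<^sub>R (y, w) \<in> Q"
    using convexD[OF assms(1-3)] t by simp
  then have in_Q: "((1 - t) *\<^sub>R x + t *\<^sub>R y, (1 - t) * z + t * w) \<in> Q"
    by simp
  have "h - z < t * (w - z)" using t wz by (simp add: pos_divide_less_eq)
  then have "h < (1 - t) * z + t * w" by (simp add: algebra_simps)
  then show ?thesis using above in_Q by blast
qed

lemma affine_hull_extend_segment:
  assumes "(1 - t) *\<^sub>R x + t *\<^sub>R y \<in> S" and "y \<in> S" and "t \<noteq> 1"
  shows "x \<in> affine hull S"
proof -
  let ?p = "(1 - t) *\<^sub>R x + t *\<^sub>R y"
  have "(1 / (1 - t)) *\<^sub>R ?p + (- t / (1 - t)) *\<^sub>R y \<in> affine hull S"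
    using \<open>t \<noteq> 1\<close>
    by (intro mem_affine[OF affine_affine_hull hull_inc[OF assms(1)] hull_inc[OF assms(2)]])
       (simp add: field_simps)
  moreover have "(1 / (1 - t)) *\<^sub>R ?p + (- t / (1 - t)) *\<^sub>R y = x"
    using \<open>t \<noteq> 1\<close> by (simp add: scaleR_add_right divide_simps)
  ultimately show ?thesis by simp
qed

lemma infdist_segment_bound:
  fixes x y :: "'a::real_normed_vector"
  assumes "bounded S" and "y \<in> S" and p: "(1 - s) *\<^sub>R x + s *\<^sub>R y \<in> S"
    and s: "0 \<le> s" "s \<le> 1"
  shows "infdist x S * (1 - s) \<le> s * diameter S"
proof -
  let ?p = "(1 - s) *\<^sub>R x + s *\<^sub>R y" and ?N = "norm (x - y)"
  have "x - ?p = s *\<^sub>R (x - y)" and "?p - y = (1 - s) *\<^sub>R (x - y)"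
    by (simp_all add: algebra_simps)
  then have dist_p: "dist x ?p = s * ?N" "dist ?p y = (1 - s) * ?N"
    using s by (simp_all add: dist_norm)
  have near_x: "infdist x S \<le> s * ?N"
    using infdist_le[OF p, of x] dist_p(1) by linarith
  have near_y: "(1 - s) * ?N \<le> diameter S"
    using diameter_bounded_bound[OF assms(1) p assms(2)] dist_p(2) by linarith
  have "infdist x S * (1 - s) \<le> s * ?N * (1 - s)"
    using near_x s by (simp add: mult_right_mono)
  also have "\<dots> = s * ((1 - s) * ?N)" by simp
  also have "\<dots> \<le> s * diameter S" using near_y s by (simp add: mult_left_mono)
  finally show ?thesis .
qed

lemma convex_below_level_infdist_bound:
  fixes Q :: "('a::real_normed_vector \<times> real) set"
  assumes "convex Q" and "bounded S" and "(x, z) \<in> Q" and "(y, w) \<in> Q"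
    and "z \<le> h" and "h < w"
    and above: "\<And>u v. (u, v) \<in> Q \<Longrightarrow> h < v \<Longrightarrow> u \<in> S"
  shows "infdist x S * (w - h) \<le> (h - z) * diameter S"
proof -
  define s\<^sub>0 where "s\<^sub>0 = (h - z) / (w - z)"
  have wz: "0 < w - z" using assms by simp
  have "s\<^sub>0 < 1" unfolding s\<^sub>0_def using wz \<open>h < w\<close> by (simp add: divide_less_eq)
  have "y \<in> S" using above \<open>(y, w) \<in> Q\<close> \<open>h < w\<close> .
  have "0 \<le> s * diameter S - infdist x S * (1 - s)" if "s \<in> {s\<^sub>0<..<1}" for s
  proof -
    have "0 \<le> s\<^sub>0" unfolding s\<^sub>0_def using wz \<open>z \<le> h\<close> by simp
    moreover have "(1 - s) *\<^sub>R x + s *\<^sub>R y \<in> S"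
      using convex_segment_above_level[OF assms(1,3,4,5,6) above] that
      unfolding s\<^sub>0_def by simp
    ultimately show ?thesis
      using infdist_segment_bound[OF \<open>bounded S\<close> \<open>y \<in> S\<close>] that by simp
  qed
  moreover have "continuous_on (closure {s\<^sub>0<..<1}) (\<lambda>s. s * diameter S - infdist x S * (1 - s))"
    by (intro continuous_intros)
  moreover have "s\<^sub>0 \<in> closure {s\<^sub>0<..<1}" using \<open>s\<^sub>0 < 1\<close> by simp
  ultimately have "0 \<le> s\<^sub>0 * diameter S - infdist x S * (1 - s\<^sub>0)"
    using continuous_ge_on_closure by blast
  then have bound: "infdist x S * (1 - s\<^sub>0) * (w - z) \<le> s\<^sub>0 * diameter S * (w - z)"
    using wz by (simp add: mult_right_mono)
  have s\<^sub>0_scaled: "s\<^sub>0 * (w - z) = h - z" unfolding s\<^sub>0_def using wz by simp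
  then have "(1 - s\<^sub>0) * (w - z) = w - h" by (simp add: algebra_simps)
  then have "infdist x S * (w - h) = infdist x S * (1 - s\<^sub>0) * (w - z)" by simp
  also have "\<dots> \<le> s\<^sub>0 * diameter S * (w - z)" by (rule bound)
  also have "\<dots> = (h - z) * diameter S" using s\<^sub>0_scaled by (simp add: ac_simps)
  finally show ?thesis .
qed

lemma convex_below_height_projection:
  fixes Q :: "('a::real_normed_vector \<times> real) set"
  assumes "convex Q" and "bounded S" and "height Q = ereal M" and "h < M"
    and above: "\<And>u v. (u, v) \<in> Q \<Longrightarrow> h < v \<Longrightarrow> u \<in> S"
    and "(x, z) \<in> Q" and "z \<le> h"
  shows "x \<in> affine hull S" and "infdist x S * (M - h) \<le> (h - z) * diameter S"
proof -
  obtain y w where yw: "(y, w) \<in> Q" "h < w"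
    using less_height_obtains[of h Q] assms(3,4) by auto
  define s\<^sub>0 where "s\<^sub>0 = (h - z) / (w - z)"
  define t where "t = (s\<^sub>0 + 1) / 2"
  have "s\<^sub>0 < 1" unfolding s\<^sub>0_def using yw \<open>z \<le> h\<close> by (simp add: divide_less_eq)
  then have "s\<^sub>0 < t" and "t < 1" unfolding t_def by simp_all
  then have "(1 - t) *\<^sub>R x + t *\<^sub>R y \<in> S"
    using convex_segment_above_level[of Q x z y w h S t] assms yw unfolding s\<^sub>0_def by simp
  moreover have "y \<in> S" using above yw .
  ultimately show "x \<in> affine hull S"
    using affine_hull_extend_segment \<open>t < 1\<close> by blast
  let ?d = "infdist x S"
  show "?d * (M - h) \<le> (h - z) * diameter S"
  proof (cases "?d = 0")
    case True
    then show ?thesis using \<open>z \<le> h\<close> by (simp add: diameter_ge_0[OF \<open>bounded S\<close>])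
  next
    case False
    then have "0 < ?d" using infdist_nonneg[of x S] by linarith
    have "w' \<le> h + (h - z) * diameter S / ?d" if "(y', w') \<in> Q" for y' w'
    proof (cases "h < w'")
      case True
      then have "?d * (w' - h) \<le> (h - z) * diameter S"
        using convex_below_level_infdist_bound[of Q S x z y' w' h] assms that by blast
      then show ?thesis using \<open>0 < ?d\<close> by (simp add: field_simps)
    next
      case False
      have "0 \<le> (h - z) * diameter S / ?d"
        using \<open>0 < ?d\<close> \<open>z \<le> h\<close> diameter_ge_0[OF \<open>bounded S\<close>] by simp
      then show ?thesis using False by simp
    qed
    then have "M \<le> h + (h - z) * diameter S / ?d"
      using height_le[of Q] assms(3) by fastforce
    then show ?thesis using \<open>0 < ?d\<close> by (simp add: field_simps)
  qed
qed

theorem lemma2: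
  fixes Q0 :: "((real ^ 'm) \<times> real) set"
    and Qx :: "(real ^ 'm) set"
    and M M0 :: real
  assumes "M0 < M"
    and "rational_polyhedron Q0"
    and "height Q0 = ereal M"
    and "rational_polytope Qx"
    and "aff_dim Qx \<ge> 1"
    and "{x. \<exists>z>M0. (x, z) \<in> Q0} \<subseteq> rel_interior Qx"
  shows "Q0 \<subseteq> R_set Qx M M0"
proof (clarify)
  fix x z assume xz: "(x, z) \<in> Q0"
  have above: "\<And>u v. (u, v) \<in> Q0 \<Longrightarrow> M0 < v \<Longrightarrow> u \<in> Qx"
    using assms(6) rel_interior_subset by blast
  show "(x, z) \<in> R_set Qx M M0"
  proof (cases "x \<in> rel_interior Qx")
    case True
    then have "x \<in> affine hull Qx" by (meson hull_inc rel_interior_subset subsetD)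
    moreover have "z \<le> M" using le_height[OF xz] assms(3) by simp
    ultimately show ?thesis using True unfolding R_set_def by simp
  next
    case False
    then have "z \<le> M0" using assms(6) xz by force
    have "bounded Qx" using rational_polytope_imp_bounded assms(4) .
    have "x \<in> affine hull Qx" and bound: "infdist x Qx * (M - M0) \<le> (M0 - z) * diameter Qx"
      using convex_below_height_projection[of Q0 Qx M M0 x z] rational_polyhedron_imp_convex[OF assms(2)] \<open>bounded Qx\<close>
        assms(1,3) above xz \<open>z \<le> M0\<close> by blast+
    moreover have "infdist x Qx / diameter Qx * (M - M0) \<le> M0 - z"
    proof (cases "diameter Qx = 0")
      case False
      then have "0 < diameter Qx" using diameter_ge_0[OF \<open>bounded Qx\<close>] by linarith
      then show ?thesis using bound by (simp add: pos_divide_le_eq)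
    qed (use \<open>z \<le> M0\<close> in simp)
    ultimately show ?thesis using False unfolding R_set_def by simp
  qed
qed

end
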